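(* For $\lambda\in(-1,1)$ let $B_\lambda(z)=\left(\frac{z-\lambda}{1-\lambda z}\right)^2$, and for $u,w\in(-1,1)$ let $B_{u,w}(z)=\left(\frac{z-w}{1-wz}\right)\left(\frac{z-u}{1-uz}\right)$. Define \[ f_\lambda(u)=\frac{(1+\lambda)u-2\lambda}{2u-(1+\lambda)}. \] Then, for $\lambda\in(-1,1)$, the conjugacy class of $B_\lambda$ within the family $\{B_{u,w}: u,w\in(-1,1)\}$ is parameterized by the curve $w=f_\lambda(u)$ in $(-1,1)^2$; that is, $B_{u,w}$ (with $u,w\in(-1,1)$) is conjugate to $B_\lambda$ by a Möbius transformation if and only if $w=f_\lambda(u)$. Moreover, for $\lambda\in(-1,1)$ the curves $f_\lambda$ are distinct, decreasing, and each intersects the line $u=w$ in only one point, namely at $u=w=\lambda$.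
   Context: Conjugacy means conjugation by a Möbius transformation preserving the unit disk. *)

theory Defs
  imports "HOL-Analysis.Analysis"
begin

definition B1 :: "real \<Rightarrow> complex \<Rightarrow> complex" where
  "B1 l z = ((z - of_real l) / (1 - of_real l * z)) ^ 2"

definition B2 :: "real \<Rightarrow> real \<Rightarrow> complex \<Rightarrow> complex" where
  "B2 u w z = ((z - of_real w) / (1 - of_real w * z)) * ((z - of_real u) / (1 - of_real u * z))"

definition f :: "real \<Rightarrow> real \<Rightarrow> real" where
  "f l u = ((1 + l) * u - 2 * l) / (2 * u - (1 + l))"

definition disk_moebius :: "(complex \<Rightarrow> complex) \<Rightarrow> bool" where
  "disk_moebius \<phi> \<longleftrightarrow>
     (\<exists>a b c d. a * d - b * c \<noteq> 0 \<and> (\<forall>z. \<phi> z = (a * z + b) / (c * z + d)))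
     \<and> \<phi> ` ball 0 1 = ball 0 1"

definition disk_conjugate :: "(complex \<Rightarrow> complex) \<Rightarrow> (complex \<Rightarrow> complex) \<Rightarrow> bool" where
  "disk_conjugate g h \<longleftrightarrow>
     (\<exists>\<phi>. disk_moebius \<phi> \<and> (\<forall>z\<in>ball 0 1. \<phi> (g z) = h (\<phi> z)))"

definition curve :: "real \<Rightarrow> (real \<times> real) set" where
  "curve l = {(u, w). u \<in> {-1<..<1} \<and> w \<in> {-1<..<1} \<and> 2 * u \<noteq> 1 + l \<and> w = f l u}"

end

theory Submission
  imports Defs "HOL-Complex_Analysis.Complex_Analysis"
begin

(*
  Real Blaschke factors compose by blaschke x (blaschke y z) = blaschke (disk_add x y) z,
  and the coordinate cayley p = (1 + p) / (1 - p) turns disk_add into multiplication.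
  For u = disk_add s c and w = disk_add (-s) c one has
  B2 u w z = blaschke (s^2) ((blaschke c z)^2), so B2 u w is conjugate by a real Blaschke
  factor to B1 l for the l with cayley l = (cayley u + cayley w) / 2, and this
  arithmetic-mean condition is exactly w = f l u.  Conversely, a disk automorphism G
  conjugating B1 a to B1 b sends the critical value 0 to 0 (nonzero values of B1 a have two
  preimages, 0 has one under B1 b) and the critical point a to b; by Schwarz's lemma G is a
  rotation, and G a = b, G (a^2) = b^2 force a = b.  As cayley is increasing, the mean
  condition makes the curves decreasing and meet the diagonal only at (l, l).
*)

section \<open>Real Blaschke factors\<close>

definition blaschke :: "real \<Rightarrow> complex \<Rightarrow> complex" where
  "blaschke p z = (z - of_real p) / (1 - of_real p * z)"

definition disk_add :: "real \<Rightarrow> real \<Rightarrow> real" where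
  "disk_add x y = (x + y) / (1 + x * y)"

lemma B1_eq_blaschke: "B1 l z = (blaschke l z)\<^sup>2"
  by (simp add: B1_def blaschke_def)

lemma B2_eq_blaschke: "B2 u w z = blaschke w z * blaschke u z"
  by (simp add: B2_def blaschke_def)

lemma blaschke_eq_Moebius_function: "blaschke p = Moebius_function 0 (of_real p)"
  by (simp add: fun_eq_iff blaschke_def Moebius_function_simple)

lemma blaschke_denom_nonzero:
  fixes z :: complex
  assumes "\<bar>p\<bar> < 1" "norm z < 1" shows "1 - of_real p * z \<noteq> 0"
proof -
  have "norm (of_real p * z) < 1"
    using norm_mult_less[of "of_real p" 1 z 1] assms by simp
  then show ?thesis by auto
qed

lemma norm_blaschke_less_1: "\<bar>p\<bar> < 1 \<Longrightarrow> norm z < 1 \<Longrightarrow> norm (blaschke p z) < 1"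
  by (simp add: blaschke_eq_Moebius_function Moebius_function_norm_lt_1)

lemma blaschke_holomorphic: "\<bar>p\<bar> < 1 \<Longrightarrow> blaschke p holomorphic_on ball 0 1"
  by (simp add: blaschke_eq_Moebius_function Moebius_function_holomorphic)

lemma blaschke_eq_0_iff: "\<bar>p\<bar> < 1 \<Longrightarrow> norm z < 1 \<Longrightarrow> blaschke p z = 0 \<longleftrightarrow> z = of_real p"
  using blaschke_denom_nonzero[of p z] by (auto simp: blaschke_def)

lemma blaschke_0 [simp]: "blaschke 0 z = z"
  by (simp add: blaschke_def)

lemma abs_disk_add_less_1:
  assumes "\<bar>x\<bar> < 1" "\<bar>y\<bar> < 1" shows "\<bar>disk_add x y\<bar> < 1"
proof -
  have "0 < (1 - x) * (1 - y)" "0 < (1 + x) * (1 + y)"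
    using assms by (auto simp: abs_less_iff)
  then show ?thesis
    by (auto simp: disk_add_def abs_less_iff field_simps)
qed

lemma blaschke_blaschke:
  assumes x: "\<bar>x\<bar> < 1" and y: "\<bar>y\<bar> < 1" and z: "norm z < 1"
  shows "blaschke x (blaschke y z) = blaschke (disk_add x y) z"
proof -
  define D where "D = 1 - of_real y * z"
  have D: "D \<noteq> 0"
    unfolding D_def using blaschke_denom_nonzero y z .
  have "\<bar>x * y\<bar> < 1"
    using abs_mult_less[OF x y] by (simp add: abs_mult)
  then have "1 + x * y \<noteq> 0"
    unfolding abs_less_iff by linarith
  then have E: "1 + of_real x * of_real y \<noteq> (0 :: complex)"
    by (metis of_real_1 of_real_add of_real_eq_0_iff of_real_mult)
  have "blaschke x (blaschke y z) = ((z - of_real y) - of_real x * D) / (D - of_real x * (z - of_real y))"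
    using D by (simp add: blaschke_def D_def[symmetric] divide_simps)
  also have "\<dots> = ((1 + of_real x * of_real y) * z - (of_real x + of_real y))
                 / ((1 + of_real x * of_real y) - (of_real x + of_real y) * z)"
    by (simp add: D_def algebra_simps)
  also have "\<dots> = blaschke (disk_add x y) z"
    using E by (simp add: blaschke_def disk_add_def divide_simps)
  finally show ?thesis .
qed

lemma disk_add_minus_self [simp]: "disk_add (-p) p = 0"
  by (simp add: disk_add_def)

lemma blaschke_minus_blaschke:
  "\<bar>p\<bar> < 1 \<Longrightarrow> norm z < 1 \<Longrightarrow> blaschke (-p) (blaschke p z) = z"
  by (simp add: blaschke_blaschke)

lemma blaschke_blaschke_minus:
  "\<bar>p\<bar> < 1 \<Longrightarrow> norm z < 1 \<Longrightarrow> blaschke p (blaschke (-p) z) = z"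
  using blaschke_minus_blaschke[of "-p" z] by simp

lemma blaschke_image_ball:
  assumes "\<bar>p\<bar> < 1" shows "blaschke p ` ball 0 1 = ball 0 1"
proof
  show "blaschke p ` ball 0 1 \<subseteq> ball 0 1"
    using norm_blaschke_less_1 assms by auto
  show "ball 0 1 \<subseteq> blaschke p ` ball 0 1"
  proof
    fix y :: complex assume "y \<in> ball 0 1"
    then show "y \<in> blaschke p ` ball 0 1"
      using assms norm_blaschke_less_1[of "-p" y] blaschke_blaschke_minus[of p y]
      by (auto intro: image_eqI[of _ _ "blaschke (-p) y"])
  qed
qed

lemma inj_on_blaschke: "\<bar>p\<bar> < 1 \<Longrightarrow> inj_on (blaschke p) (ball 0 1)"
  by (metis inj_on_inverseI blaschke_minus_blaschke mem_ball_0)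

lemma disk_moebius_blaschke:
  assumes "\<bar>p\<bar> < 1" shows "disk_moebius (blaschke p)"
  unfolding disk_moebius_def
proof (intro conjI exI allI)
  have "p * p < 1"
    using assms abs_mult_less[OF assms assms] by (simp add: abs_mult)
  then show "1 * 1 - (- of_real p) * (- of_real p) \<noteq> (0 :: complex)"
    by (metis of_real_mult of_real_1 of_real_eq_iff less_irrefl right_minus_eq minus_mult_minus mult_1)
  show "blaschke p z = (1 * z + - of_real p) / (- of_real p * z + 1)" for z
    by (simp add: blaschke_def)
  show "blaschke p ` ball 0 1 = ball 0 1"
    using blaschke_image_ball assms .
qed

lemma blaschke_minus_times_blaschke:
  "blaschke (-s) y * blaschke s y = blaschke (s\<^sup>2) (y\<^sup>2)"
proof -
  have "(1 + of_real s * y) * (1 - of_real s * y) = 1 - of_real (s\<^sup>2) * y\<^sup>2"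
    by (simp add: algebra_simps power2_eq_square)
  moreover have "(y + of_real s) * (y - of_real s) = y\<^sup>2 - of_real (s\<^sup>2)"
    by (simp add: algebra_simps power2_eq_square)
  ultimately show ?thesis
    by (simp add: blaschke_def)
qed

lemma B2_disk_add_eq_blaschke:
  assumes s: "\<bar>s\<bar> < 1" and c: "\<bar>c\<bar> < 1" and z: "norm z < 1"
  shows "B2 (disk_add s c) (disk_add (-s) c) z = blaschke (s\<^sup>2) ((blaschke c z)\<^sup>2)"
  using blaschke_minus_times_blaschke[of s "blaschke c z"] assms
  by (simp add: B2_eq_blaschke blaschke_blaschke)

section \<open>Cayley coordinates on the real diameter\<close>

definition cayley :: "real \<Rightarrow> real" where
  "cayley x = (1 + x) / (1 - x)"

lemma cayley_pos_iff: "0 < cayley x \<longleftrightarrow> \<bar>x\<bar> < 1"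
  by (auto simp: cayley_def zero_less_divide_iff abs_less_iff)

lemma cayley_less_cayley_iff:
  assumes "\<bar>x\<bar> < 1" "\<bar>y\<bar> < 1" shows "cayley x < cayley y \<longleftrightarrow> x < y"
proof -
  have "cayley y - cayley x = 2 * (y - x) / ((1 - x) * (1 - y))"
    using assms by (simp add: cayley_def field_simps abs_less_iff)
  moreover have "0 < (1 - x) * (1 - y)"
    using assms by (simp add: abs_less_iff)
  ultimately show ?thesis
    by (smt (verit) divide_pos_pos divide_nonpos_pos)
qed

lemma cayley_eq_cayley_iff:
  "\<bar>x\<bar> < 1 \<Longrightarrow> \<bar>y\<bar> < 1 \<Longrightarrow> cayley x = cayley y \<longleftrightarrow> x = y"
  by (metis cayley_less_cayley_iff linorder_neq_iff)

lemma cayley_surj: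
  assumes "0 < t" obtains x where "\<bar>x\<bar> < 1" "cayley x = t"
proof
  show "\<bar>(t - 1) / (t + 1)\<bar> < 1" "cayley ((t - 1) / (t + 1)) = t"
    using assms by (simp_all add: cayley_def abs_less_iff field_simps)
qed

lemma cayley_disk_add:
  assumes "\<bar>x\<bar> < 1" "\<bar>y\<bar> < 1" shows "cayley (disk_add x y) = cayley x * cayley y"
proof -
  have "0 < 1 + x * y"
    using abs_mult_less[OF assms] unfolding abs_mult[symmetric] abs_less_iff by linarith
  then have "1 + disk_add x y = (1 + x) * (1 + y) / (1 + x * y)"
    and "1 - disk_add x y = (1 - x) * (1 - y) / (1 + x * y)"
    by (simp_all add: disk_add_def field_simps)
  then show ?thesis
    using \<open>0 < 1 + x * y\<close> by (simp add: cayley_def)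
qed

lemma cayley_minus: "cayley (-x) = inverse (cayley x)"
  by (simp add: cayley_def)

lemma cayley_square:
  assumes "\<bar>x\<bar> < 1" shows "cayley (x\<^sup>2) = (1 + (cayley x)\<^sup>2) / (2 * cayley x)"
proof -
  have "1 - x \<noteq> 0" "1 + x \<noteq> 0" "1 - x\<^sup>2 = (1 - x) * (1 + x)"
    using assms by (auto simp: abs_less_iff power2_eq_square algebra_simps)
  then show ?thesis
    by (simp add: cayley_def divide_simps) (simp add: algebra_simps power2_eq_square)
qed

lemma cayley_mean_parametrization:
  assumes l: "\<bar>l\<bar> < 1" and u: "\<bar>u\<bar> < 1" and w: "\<bar>w\<bar> < 1"
    and mean: "cayley u + cayley w = 2 * cayley l"
  obtains s c where "\<bar>s\<bar> < 1" "\<bar>c\<bar> < 1"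
    "u = disk_add s c" "w = disk_add (-s) c" "c = disk_add l (-(s\<^sup>2))"
proof -
  define U W where "U = cayley u" and "W = cayley w"
  have U: "0 < U" and W: "0 < W"
    using u w by (simp_all add: U_def W_def cayley_pos_iff)
  define S where "S = sqrt (U / W)"
  have S: "0 < S" "S\<^sup>2 = U / W"
    using U W by (simp_all add: S_def)
  obtain s where s: "\<bar>s\<bar> < 1" "cayley s = S"
    using cayley_surj S(1) by blast
  \<comment> \<open>With \<open>C = W S\<close>: \<open>cayley u = C S\<close>, \<open>cayley w = C / S\<close>, \<open>cayley l = C (S + 1 / S) / 2\<close>.\<close>
  obtain c where c: "\<bar>c\<bar> < 1" "cayley c = W * S"
    using cayley_surj W S(1) by (metis mult_pos_pos)
  have s': "\<bar>-s\<bar> < 1" and s2: "\<bar>-(s\<^sup>2)\<bar> < 1"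
    using s(1) by (simp_all add: abs_square_less_1)
  have "cayley (disk_add s c) = cayley u"
    using S W by (simp add: cayley_disk_add s c U_def[symmetric] power2_eq_square field_simps)
  moreover have "cayley (disk_add (-s) c) = cayley w"
    using S W by (simp add: cayley_disk_add s s' c cayley_minus U_def[symmetric] W_def[symmetric])
  moreover have "cayley (disk_add l (-(s\<^sup>2))) = cayley c"
  proof -
    have "cayley (disk_add l (-(s\<^sup>2))) = (U + W) / 2 * (2 * S / (1 + S\<^sup>2))"
      using mean s l s2 by (simp add: cayley_disk_add cayley_minus cayley_square U_def W_def)
    also have "\<dots> = W * S"
    proof -
      have "U = W * S\<^sup>2"
        using S W by simp
      moreover have "0 < 1 + S\<^sup>2"
        by (simp add: add_pos_nonneg)
      ultimately show ?thesis
        by (simp add: field_simps)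
    qed
    finally show ?thesis
      using c by simp
  qed
  ultimately show ?thesis
    using that s c s' s2 u w l
    by (metis abs_disk_add_less_1 cayley_eq_cayley_iff)
qed

lemma blaschke_conjugates_B2_B1:
  assumes l: "\<bar>l\<bar> < 1" and u: "\<bar>u\<bar> < 1" and w: "\<bar>w\<bar> < 1"
    and mean: "cayley u + cayley w = 2 * cayley l"
  obtains p where "\<bar>p\<bar> < 1" "\<forall>z\<in>ball 0 1. blaschke p (B2 u w z) = B1 l (blaschke p z)"
proof -
  obtain s c where s: "\<bar>s\<bar> < 1" and c: "\<bar>c\<bar> < 1"
    and uwc: "u = disk_add s c" "w = disk_add (-s) c" "c = disk_add l (-(s\<^sup>2))"
    using cayley_mean_parametrization[OF l u w mean] .
  have s2: "\<bar>s\<^sup>2\<bar> < 1" "\<bar>-(s\<^sup>2)\<bar> < 1"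
    using s by (simp_all add: abs_square_less_1)
  show ?thesis
  proof (rule that[OF s2(2)], intro ballI)
    fix z :: complex assume "z \<in> ball 0 1"
    then have z: "norm z < 1" by simp
    have Y: "norm ((blaschke c z)\<^sup>2) < 1"
      using norm_blaschke_less_1[OF c z] by (simp add: norm_power abs_square_less_1)
    have "blaschke (-(s\<^sup>2)) (B2 u w z) = (blaschke c z)\<^sup>2"
      using B2_disk_add_eq_blaschke[OF s c z] blaschke_minus_blaschke[OF s2(1) Y] uwc by simp
    also have "\<dots> = B1 l (blaschke (-(s\<^sup>2)) z)"
      using uwc(3) l s2(2) z by (simp add: B1_eq_blaschke blaschke_blaschke)
    finally show "blaschke (-(s\<^sup>2)) (B2 u w z) = B1 l (blaschke (-(s\<^sup>2)) z)" .
  qed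
qed

section \<open>Rigidity of \<open>B1\<close> under disk automorphisms\<close>

lemma moebius_pole_outside_disk:
  fixes a b c d z0 :: complex
  assumes \<phi>: "\<And>z. \<phi> z = (a * z + b) / (c * z + d)" and det: "a * d - b * c \<noteq> 0"
    and maps: "\<phi> ` ball 0 1 \<subseteq> ball 0 1" and z0: "norm z0 < 1"
  shows "c * z0 + d \<noteq> 0"
proof
  assume pole: "c * z0 + d = 0"
  then have d: "d = - c * z0"
    by (simp add: eq_neg_iff_add_eq_0 add.commute)
  have "c \<noteq> 0"
    using det d by auto
  have "a * z0 + b \<noteq> 0"
  proof
    assume "a * z0 + b = 0"
    then have "b = - a * z0"
      by (simp add: eq_neg_iff_add_eq_0 add.commute)
    with det d show False
      by (simp add: algebra_simps)
  qed
  have "eventually (\<lambda>z. c * z + d \<noteq> 0) (at z0)"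
    using \<open>c \<noteq> 0\<close> by (simp add: eventually_at_filter d algebra_simps flip: right_diff_distrib)
  then have "filterlim (\<lambda>z. c * z + d) (at 0) (at z0)"
    using pole by (intro filterlim_atI) (auto intro!: tendsto_eq_intros)
  then have "is_pole (\<lambda>z. (a * z + b) / (c * z + d)) z0"
    using \<open>a * z0 + b \<noteq> 0\<close> by (intro is_pole_divide) (auto intro!: continuous_intros)
  then have "eventually (\<lambda>z. 1 \<le> norm (\<phi> z)) (at z0)"
    unfolding is_pole_def \<phi>[abs_def] by (simp add: filterlim_at_infinity[of 0])
  moreover have "eventually (\<lambda>z. z \<in> ball 0 1) (at z0)"
    using z0 by (intro eventually_at_in_open') auto
  ultimately have "eventually (\<lambda>z. False) (at z0)"
    by eventually_elim (use maps in \<open>force simp: image_subset_iff\<close>)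
  then show False
    by simp
qed

lemma disk_moebius_holomorphic:
  assumes "disk_moebius \<phi>" shows "\<phi> holomorphic_on ball 0 1"
proof -
  obtain a b c d where det: "a * d - b * c \<noteq> 0" and \<phi>: "\<And>z. \<phi> z = (a * z + b) / (c * z + d)"
    and img: "\<phi> ` ball 0 1 = ball 0 1"
    using assms unfolding disk_moebius_def by blast
  have "(\<lambda>z. (a * z + b) / (c * z + d)) holomorphic_on ball 0 1"
    using moebius_pole_outside_disk[OF \<phi> det] img by (intro holomorphic_intros) auto
  then show ?thesis
    by (rule holomorphic_transform) (simp add: \<phi>)
qed

lemma inj_on_disk_moebius:
  assumes "disk_moebius \<phi>" shows "inj_on \<phi> (ball 0 1)"
proof
  obtain a b c d where det: "a * d - b * c \<noteq> 0" and \<phi>: "\<And>z. \<phi> z = (a * z + b) / (c * z + d)"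
    and img: "\<phi> ` ball 0 1 = ball 0 1"
    using assms unfolding disk_moebius_def by blast
  fix x y assume "x \<in> ball 0 1" "y \<in> ball 0 1" "\<phi> x = \<phi> y"
  moreover from calculation have "c * x + d \<noteq> 0" "c * y + d \<noteq> 0"
    using moebius_pole_outside_disk[OF \<phi> det] img by auto
  ultimately have "(a * d - b * c) * (x - y) = 0"
    by (simp add: \<phi> frac_eq_eq algebra_simps)
  then show "x = y"
    using det by simp
qed

lemma disk_automorphism_fixing_0_is_rotation:
  assumes hol: "F holomorphic_on ball 0 1" and inj: "inj_on F (ball 0 1)"
    and onto: "F ` ball 0 1 = ball 0 1" and F0: "F 0 = 0"
  obtains \<xi> where "norm \<xi> = 1" "\<And>z. norm z < 1 \<Longrightarrow> F z = \<xi> * z"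
proof -
  obtain G where holG: "G holomorphic_on ball 0 1" and GF: "\<And>z. z \<in> ball 0 1 \<Longrightarrow> G (F z) = z"
    using holomorphic_has_inverse[OF hol _ inj] onto by (metis open_ball)
  have G0: "G 0 = 0"
    using GF[of 0] F0 by simp
  have maps_F: "norm (F z) < 1" if "norm z < 1" for z
    using onto that by auto
  have maps_G: "norm (G y) < 1" if "norm y < 1" for y
    using onto that GF by (metis image_iff mem_ball_0)
  define h :: complex where "h = 1 / 2"
  have h: "norm h < 1" "h \<noteq> 0"
    by (simp_all add: h_def)
  have "norm (F h) \<le> norm h"
    using Schwarz_Lemma(1)[OF hol F0 maps_F h(1)] .
  moreover have "norm h \<le> norm (F h)"
    using Schwarz_Lemma(1)[OF holG G0 maps_G maps_F[OF h(1)]] GF h(1) by simp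
  ultimately have "norm (F h) = norm h"
    by simp
  then show ?thesis
    using Schwarz_Lemma(3)[OF hol F0 maps_F h(1)] h that by blast
qed

lemma norm_B1_less_1: "\<bar>a\<bar> < 1 \<Longrightarrow> norm z < 1 \<Longrightarrow> norm (B1 a z) < 1"
  using norm_blaschke_less_1 by (simp add: B1_eq_blaschke norm_power abs_square_less_1)

lemma B1_eq_0_iff: "\<bar>a\<bar> < 1 \<Longrightarrow> norm z < 1 \<Longrightarrow> B1 a z = 0 \<longleftrightarrow> z = of_real a"
  by (simp add: B1_eq_blaschke blaschke_eq_0_iff)

lemma B1_conjugacy_maps_critical_point:
  assumes a: "\<bar>a\<bar> < 1" and b: "\<bar>b\<bar> < 1"
    and inj: "inj_on G (ball 0 1)" and onto: "G ` ball 0 1 = ball 0 1"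
    and conj: "\<forall>z\<in>ball 0 1. G (B1 a z) = B1 b (G z)"
  shows "G 0 = 0" and "G (of_real a) = of_real b"
proof -
  have G_eq_b: "G z = of_real b \<longleftrightarrow> B1 b (G z) = 0" if "norm z < 1" for z
  proof -
    have "norm (G z) < 1"
      using onto that by auto
    then show ?thesis
      using B1_eq_0_iff[OF b] by simp
  qed
  have "of_real b \<in> G ` ball 0 1"
    using onto b by simp
  then obtain \<beta> where \<beta>: "norm \<beta> < 1" "G \<beta> = of_real b"
    by auto
  define \<alpha> where "\<alpha> = B1 a \<beta>"
  have \<alpha>: "norm \<alpha> < 1" "G \<alpha> = 0"
    using norm_B1_less_1[OF a \<beta>(1)] conj \<beta> G_eq_b by (simp_all add: \<alpha>_def)
  have "\<alpha> = 0"
  proof (rule ccontr)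
    assume "\<alpha> \<noteq> 0"
    define s where "s = csqrt \<alpha>"
    have s: "s\<^sup>2 = \<alpha>" "s \<noteq> 0"
      using \<open>\<alpha> \<noteq> 0\<close> by (auto simp: s_def)
    have "norm s < 1"
      using \<alpha>(1) s(1) by (metis abs_square_less_1 abs_norm_cancel norm_power)
    define z1 z2 where "z1 = blaschke (-a) s" and "z2 = blaschke (-a) (-s)"
    have z: "norm z1 < 1" "norm z2 < 1" "blaschke a z1 = s" "blaschke a z2 = -s"
      using a \<open>norm s < 1\<close> norm_blaschke_less_1[of "-a"] blaschke_blaschke_minus[of a]
      by (simp_all add: z1_def z2_def)
    have "B1 a z1 = \<alpha>" "B1 a z2 = \<alpha>"
      using z(3,4) s(1) by (simp_all add: B1_eq_blaschke)
    then have "B1 b (G z1) = 0" "B1 b (G z2) = 0"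
      using conj z(1,2) \<alpha>(2) by (metis mem_ball_0)+
    then have "G z1 = of_real b" "G z2 = of_real b"
      using z(1,2) G_eq_b by blast+
    then have "z1 = z2"
      using inj z(1,2) by (simp add: inj_on_def)
    then show False
      using z(3,4) s(2) by simp
  qed
  then have "\<beta> = of_real a"
    using B1_eq_0_iff[OF a \<beta>(1)] by (simp add: \<alpha>_def)
  then show "G 0 = 0" "G (of_real a) = of_real b"
    using \<alpha>(2) \<open>\<alpha> = 0\<close> \<beta>(2) by simp_all
qed

lemma B1_conjugacy_rigid:
  assumes a: "\<bar>a\<bar> < 1" and b: "\<bar>b\<bar> < 1"
    and hol: "G holomorphic_on ball 0 1" and inj: "inj_on G (ball 0 1)"
    and onto: "G ` ball 0 1 = ball 0 1"
    and conj: "\<forall>z\<in>ball 0 1. G (B1 a z) = B1 b (G z)"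
  shows "a = b"
proof -
  note crit = B1_conjugacy_maps_critical_point[OF a b inj onto conj]
  obtain \<xi> where \<xi>: "norm \<xi> = 1" "\<And>z. norm z < 1 \<Longrightarrow> G z = \<xi> * z"
    using disk_automorphism_fixing_0_is_rotation[OF hol inj onto crit(1)] by blast
  have "\<xi> * of_real a = of_real b"
    using crit(2) \<xi>(2)[of "of_real a"] a by simp
  moreover have "\<xi> * (of_real a)\<^sup>2 = (of_real b)\<^sup>2"
  proof -
    have "norm ((of_real a)\<^sup>2 :: complex) < 1"
      using a by (simp add: norm_power abs_square_less_1)
    then show ?thesis
      using conj[rule_format, of 0] crit(1) \<xi>(2) by (simp add: B1_eq_blaschke blaschke_def)
  qed
  ultimately have "\<xi> * (of_real a)\<^sup>2 = (\<xi> * of_real a)\<^sup>2"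
    by simp
  then have "\<xi> * (1 - \<xi>) * (of_real a)\<^sup>2 = 0"
    by (simp add: algebra_simps power2_eq_square)
  then have "\<xi> = 1 \<or> a = 0"
    using \<xi>(1) by auto
  then show "a = b"
    using \<open>\<xi> * of_real a = of_real b\<close> by auto
qed

section \<open>The conjugacy class of \<open>B1 l\<close> and its curve\<close>

lemma disk_moebius_comp_blaschke:
  assumes \<phi>: "disk_moebius \<phi>" and p: "\<bar>p\<bar> < 1"
  shows "(\<phi> \<circ> blaschke p) holomorphic_on ball 0 1"
    and "inj_on (\<phi> \<circ> blaschke p) (ball 0 1)"
    and "(\<phi> \<circ> blaschke p) ` ball 0 1 = ball 0 1"
proof -
  show "(\<phi> \<circ> blaschke p) holomorphic_on ball 0 1"
    using blaschke_holomorphic[OF p] disk_moebius_holomorphic[OF \<phi>]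
    by (rule holomorphic_on_compose_gen) (simp add: blaschke_image_ball[OF p])
  show "inj_on (\<phi> \<circ> blaschke p) (ball 0 1)"
    using inj_on_disk_moebius[OF \<phi>]
    by (intro comp_inj_on inj_on_blaschke p) (simp add: blaschke_image_ball[OF p])
  show "(\<phi> \<circ> blaschke p) ` ball 0 1 = ball 0 1"
    using \<phi> blaschke_image_ball[OF p] unfolding disk_moebius_def image_comp[symmetric] by simp
qed

lemma norm_B2_less_1:
  assumes "\<bar>u\<bar> < 1" "\<bar>w\<bar> < 1" "norm z < 1" shows "norm (B2 u w z) < 1"
proof -
  have "norm (blaschke w z * blaschke u z) < 1 * 1"
    using norm_blaschke_less_1 assms by (intro norm_mult_less) auto
  then show ?thesis
    by (simp add: B2_eq_blaschke)
qed

lemma disk_conjugate_B2_B1_iff: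
  assumes l: "\<bar>l\<bar> < 1" and u: "\<bar>u\<bar> < 1" and w: "\<bar>w\<bar> < 1"
  shows "disk_conjugate (B2 u w) (B1 l) \<longleftrightarrow> cayley u + cayley w = 2 * cayley l"
proof
  assume "cayley u + cayley w = 2 * cayley l"
  then obtain p where "\<bar>p\<bar> < 1" "\<forall>z\<in>ball 0 1. blaschke p (B2 u w z) = B1 l (blaschke p z)"
    using blaschke_conjugates_B2_B1 l u w by blast
  then show "disk_conjugate (B2 u w) (B1 l)"
    unfolding disk_conjugate_def using disk_moebius_blaschke by blast
next
  assume "disk_conjugate (B2 u w) (B1 l)"
  then obtain \<phi> where \<phi>: "disk_moebius \<phi>" and conj: "\<forall>z\<in>ball 0 1. \<phi> (B2 u w z) = B1 l (\<phi> z)"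
    unfolding disk_conjugate_def by blast
  have "0 < (cayley u + cayley w) / 2"
    using u w by (simp add: cayley_pos_iff[symmetric])
  then obtain l' where l': "\<bar>l'\<bar> < 1" and mean: "cayley u + cayley w = 2 * cayley l'"
    by (rule cayley_surj) simp
  then obtain p where p: "\<bar>p\<bar> < 1"
    and conj_p: "\<forall>z\<in>ball 0 1. blaschke p (B2 u w z) = B1 l' (blaschke p z)"
    using blaschke_conjugates_B2_B1 u w by blast
  have p': "\<bar>-p\<bar> < 1"
    using p by simp
  have "(\<phi> \<circ> blaschke (-p)) (B1 l' z) = B1 l ((\<phi> \<circ> blaschke (-p)) z)" if "z \<in> ball 0 1" for z
  proof -
    define y where "y = blaschke (-p) z"
    have y: "norm y < 1" "blaschke p y = z"
      using that p norm_blaschke_less_1[OF p'] blaschke_blaschke_minus by (simp_all add: y_def)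
    then have "blaschke (-p) (B1 l' z) = B2 u w y"
      using conj_p blaschke_minus_blaschke[OF p] norm_B2_less_1[OF u w] by (metis mem_ball_0)
    then show ?thesis
      using conj y(1) by (simp add: y_def)
  qed
  then have "l' = l"
    using B1_conjugacy_rigid[OF l' l disk_moebius_comp_blaschke[OF \<phi> p']] by blast
  then show "cayley u + cayley w = 2 * cayley l"
    using mean by simp
qed

lemma two_cayley_minus_cayley:
  assumes "l \<noteq> 1" "u \<noteq> 1"
  shows "2 * cayley l - cayley u = ((1 + 3 * l) - (3 + l) * u) / ((1 - l) * (1 - u))"
  using assms by (simp add: cayley_def field_simps)

lemma cayley_f:
  assumes "2 * u \<noteq> 1 + l" "l \<noteq> 1" "u \<noteq> 1"
  shows "cayley (f l u) = 2 * cayley l - cayley u"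
proof -
  have "(1 + l) - 2 * u \<noteq> 0"
    using assms(1) by simp
  moreover have "1 + f l u = ((1 + 3 * l) - (3 + l) * u) / ((1 + l) - 2 * u)"
    and "1 - f l u = ((1 - l) * (1 - u)) / ((1 + l) - 2 * u)"
    using assms(1) by (simp_all add: f_def field_simps)
  ultimately have "cayley (f l u) = ((1 + 3 * l) - (3 + l) * u) / ((1 - l) * (1 - u))"
    by (simp add: cayley_def)
  then show ?thesis
    using two_cayley_minus_cayley[OF assms(2,3)] by simp
qed

lemma curve_iff_cayley_mean:
  assumes l: "\<bar>l\<bar> < 1"
  shows "(u, w) \<in> curve l \<longleftrightarrow> \<bar>u\<bar> < 1 \<and> \<bar>w\<bar> < 1 \<and> cayley u + cayley w = 2 * cayley l"
proof
  assume "(u, w) \<in> curve l"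
  then show "\<bar>u\<bar> < 1 \<and> \<bar>w\<bar> < 1 \<and> cayley u + cayley w = 2 * cayley l"
    using l by (auto simp: curve_def abs_less_iff cayley_f)
next
  assume "\<bar>u\<bar> < 1 \<and> \<bar>w\<bar> < 1 \<and> cayley u + cayley w = 2 * cayley l"
  then have u: "\<bar>u\<bar> < 1" and w: "\<bar>w\<bar> < 1" and cw: "cayley w = 2 * cayley l - cayley u"
    by auto
  have D: "0 < (1 - l) * (1 - u)"
    using l u by (simp add: abs_less_iff)
  \<comment> \<open>On the line \<open>2 u = 1 + l\<close> the mean condition would force \<open>cayley w = -1\<close>.\<close>
  have "2 * u \<noteq> 1 + l"
  proof
    assume "2 * u = 1 + l"
    then have "(1 + 3 * l) - (3 + l) * u = - ((1 - l) * (1 - u))"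
      by (simp add: algebra_simps)
    then have "cayley w = -1"
      using cw D l u by (simp add: two_cayley_minus_cayley abs_less_iff)
    then show False
      using w cayley_pos_iff[of w] by simp
  qed
  then have "cayley (f l u) = cayley w"
    using cw l u by (simp add: cayley_f abs_less_iff)
  moreover from this have "\<bar>f l u\<bar> < 1"
    using w by (simp add: cayley_pos_iff[symmetric])
  ultimately have "w = f l u"
    using w cayley_eq_cayley_iff by blast
  then show "(u, w) \<in> curve l"
    using u w \<open>2 * u \<noteq> 1 + l\<close> by (simp add: curve_def abs_less_iff)
qed

lemma curve_decreasing:
  assumes l: "\<bar>l\<bar> < 1" and "(u1, w1) \<in> curve l" "(u2, w2) \<in> curve l" and "u1 < u2"
  shows "w2 < w1"
proof -
  have "\<bar>u1\<bar> < 1" "\<bar>w1\<bar> < 1" "cayley u1 + cayley w1 = 2 * cayley l"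
    and "\<bar>u2\<bar> < 1" "\<bar>w2\<bar> < 1" "cayley u2 + cayley w2 = 2 * cayley l"
    using assms(2,3) unfolding curve_iff_cayley_mean[OF l] by auto
  moreover from calculation have "cayley u1 < cayley u2"
    using \<open>u1 < u2\<close> cayley_less_cayley_iff by blast
  ultimately show ?thesis
    using cayley_less_cayley_iff[of w2 w1] by linarith
qed

lemma curve_diagonal:
  assumes l: "\<bar>l\<bar> < 1" shows "{u. (u, u) \<in> curve l} = {l}"
proof -
  have "(u, u) \<in> curve l \<longleftrightarrow> u = l" for u
    using curve_iff_cayley_mean[OF l, of u u] cayley_eq_cayley_iff[OF _ l, of u] l by auto
  then show ?thesis
    by blast
qed

theorem theorem3p6:
  shows "(\<forall>l\<in>{-1<..<1}. \<forall>u\<in>{-1<..<1}. \<forall>w\<in>{-1<..<1}.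
            disk_conjugate (B2 u w) (B1 l) \<longleftrightarrow> (u, w) \<in> curve l)
       \<and> (\<forall>l1\<in>{-1<..<1}. \<forall>l2\<in>{-1<..<1}. l1 \<noteq> l2 \<longrightarrow> curve l1 \<noteq> curve l2)
       \<and> (\<forall>l\<in>{-1<..<1}. \<forall>u1 w1 u2 w2. (u1, w1) \<in> curve l \<longrightarrow> (u2, w2) \<in> curve l \<longrightarrow>
            u1 < u2 \<longrightarrow> w2 < w1)
       \<and> (\<forall>l\<in>{-1<..<1}. {u. (u, u) \<in> curve l} = {l})"
proof (intro conjI ballI allI impI)
  fix l u w :: real assume "l \<in> {-1<..<1}" "u \<in> {-1<..<1}" "w \<in> {-1<..<1}"
  then have "\<bar>l\<bar> < 1" "\<bar>u\<bar> < 1" "\<bar>w\<bar> < 1"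
    by (simp_all add: abs_less_iff)
  then show "disk_conjugate (B2 u w) (B1 l) \<longleftrightarrow> (u, w) \<in> curve l"
    by (simp add: disk_conjugate_B2_B1_iff curve_iff_cayley_mean)
next
  fix l1 l2 :: real assume "l1 \<in> {-1<..<1}" "l2 \<in> {-1<..<1}" "l1 \<noteq> l2"
  then have "{u. (u, u) \<in> curve l1} \<noteq> {u. (u, u) \<in> curve l2}"
    using curve_diagonal[of l1] curve_diagonal[of l2] by (simp add: abs_less_iff)
  then show "curve l1 \<noteq> curve l2"
    by auto
next
  fix l u1 w1 u2 w2 :: real
  assume "l \<in> {-1<..<1}" "(u1, w1) \<in> curve l" "(u2, w2) \<in> curve l" "u1 < u2"
  then show "w2 < w1"
    using curve_decreasing[of l u1 w1 u2 w2] by (simp add: abs_less_iff)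
next
  fix l :: real assume "l \<in> {-1<..<1}"
  then show "{u. (u, u) \<in> curve l} = {l}"
    using curve_diagonal[of l] by (simp add: abs_less_iff)
qed

end
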